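(* Let $n\in\mathbb{N}$ and $\alpha,\beta>-1$, and put $\sigma:=\alpha+\beta+1$. For every $i=0,1,\ldots,n$, \[ D^n_i(x;\alpha,\beta)=\sum_{j=0}^{n}c_{ij}(n,\alpha,\beta)\,B^n_j(x), \] where the coefficients $c_{ij}(n,\alpha,\beta)$ ($0\le j\le n$) are given by either of the following two (equal) expressions: \[ c_{ij}(n,\alpha,\beta)=\frac{1}{B(\alpha+1,\beta+1)}\sum_{m=0}^n\frac{(2m/\sigma+1)(\beta+1)_m(\sigma)_m}{m!\,(\alpha+1)_m}\,Q_m(i;\beta,\alpha,n)\,Q_m(j;\beta,\alpha,n), \] \[ c_{ij}(n,\alpha,\beta)=\frac{(-1)^{n}(\sigma+1)_{n}(-\alpha-n)_i}{B(\alpha+1,\beta+1)\,n!\,(\beta+1)_i}\sum_{h=0}^{i}\frac{(-i)_h}{(-\alpha-n)_h}\,Q_{n-h}(n-j;\alpha,\beta+h+1,n). \]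
   Context: For $\alpha,\beta>-1$ define the inner product $\langle f,g\rangle:=\int_0^1(1-x)^{\alpha}x^{\beta}f(x)g(x)\,dx$. The Bernstein polynomials of degree $n$ are $B^n_i(x)=\binom ni x^i(1-x)^{n-i}$, $0\le i\le n$. The dual Bernstein polynomials $D^n_0(x;\alpha,\beta),\ldots,D^n_n(x;\alpha,\beta)$ are the unique polynomials of degree at most $n$ with $\langle D^n_i,B^n_j\rangle=\delta_{ij}$ for $i,j=0,\ldots,n$. Notation: $(c)_k:=\prod_{j=0}^{k-1}(c+j)$ (with $(c)_0=1$); $B(\lambda,\mu)=\Gamma(\lambda)\Gamma(\mu)/\Gamma(\lambda+\mu)$; ${}_rF_s$ denotes the generalized hypergeometric series $\sum_{k\ge0}\frac{(a_1)_k\cdots(a_r)_k}{k!(b_1)_k\cdots(b_s)_k}z^k$. The Hahn polynomials are $Q_m(x;a,b,N):={}_3F_2\!\left(-m,\,m+a+b+1,\,-x;\;a+1,\,-N;\;1\right)$ for $m=0,1,\ldots,N$, $N\in\mathbb{N}$ (a terminating sum, since $(-m)_k=0$ for $k>m$). *)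

theory Defs
  imports "HOL-Analysis.Analysis" "HOL-Computational_Algebra.Polynomial"
begin

definition jinner :: "real \<Rightarrow> real \<Rightarrow> (real \<Rightarrow> real) \<Rightarrow> (real \<Rightarrow> real) \<Rightarrow> real" where
  "jinner \<alpha> \<beta> f g = (LINT x:{0..1}|lborel. (1 - x) powr \<alpha> * x powr \<beta> * f x * g x)"

definition bernstein :: "nat \<Rightarrow> nat \<Rightarrow> real \<Rightarrow> real" where
  "bernstein n i x = real (n choose i) * x ^ i * (1 - x) ^ (n - i)"

definition dual_bernstein :: "nat \<Rightarrow> real \<Rightarrow> real \<Rightarrow> nat \<Rightarrow> real poly" where
  "dual_bernstein n \<alpha> \<beta> i = (THE p. degree p \<le> n \<and>
      (\<forall>j\<le>n. jinner \<alpha> \<beta> (poly p) (bernstein n j) = (if i = j then 1 else 0)))"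

text \<open>Hahn polynomials Q_m(x;a,b,N) = 3F2(-m, m+a+b+1, -x; a+1, -N; 1) (terminating sum).\<close>
definition hahnQ :: "nat \<Rightarrow> real \<Rightarrow> real \<Rightarrow> real \<Rightarrow> nat \<Rightarrow> real" where
  "hahnQ m x a b N = (\<Sum>k\<le>m. pochhammer (- real m) k * pochhammer (real m + a + b + 1) k
      * pochhammer (- x) k / (fact k * pochhammer (a + 1) k * pochhammer (- real N) k))"

text \<open>The factor (2m/sigma + 1)(sigma)_m, written in the form that is continuous at sigma = 0:
  it equals 1 for m = 0 and (2m + sigma)(sigma+1)_{m-1} for m >= 1.\<close>
definition hahn_weight_factor :: "real \<Rightarrow> nat \<Rightarrow> real" where
  "hahn_weight_factor \<sigma> m = (if m = 0 then 1 else (2 * real m + \<sigma>) * pochhammer (\<sigma> + 1) (m - 1))"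

definition c_coef1 :: "nat \<Rightarrow> real \<Rightarrow> real \<Rightarrow> nat \<Rightarrow> nat \<Rightarrow> real" where
  "c_coef1 n \<alpha> \<beta> i j = 1 / Beta (\<alpha> + 1) (\<beta> + 1) *
     (\<Sum>m\<le>n. hahn_weight_factor (\<alpha> + \<beta> + 1) m * pochhammer (\<beta> + 1) m
        / (fact m * pochhammer (\<alpha> + 1) m)
        * hahnQ m (real i) \<beta> \<alpha> n * hahnQ m (real j) \<beta> \<alpha> n)"

definition c_coef2 :: "nat \<Rightarrow> real \<Rightarrow> real \<Rightarrow> nat \<Rightarrow> nat \<Rightarrow> real" where
  "c_coef2 n \<alpha> \<beta> i j = (-1) ^ n * pochhammer (\<alpha> + \<beta> + 2) n * pochhammer (- \<alpha> - real n) i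
      / (Beta (\<alpha> + 1) (\<beta> + 1) * fact n * pochhammer (\<beta> + 1) i)
      * (\<Sum>h\<le>i. pochhammer (- real i) h / pochhammer (- \<alpha> - real n) h
           * hahnQ (n - h) (real n - real j) \<alpha> (\<beta> + real h + 1) n)"

end

theory Submission
  imports Defs
begin

text \<open>
  Since \<open>x^k = \<Sum>\<^sub>j ((-j)\<^sub>k / (-n)\<^sub>k) B\<^sup>n\<^sub>j(x)\<close>, a polynomial \<open>p\<close> of degree \<open>\<le> n\<close>
  satisfies \<open>\<langle>p, B\<^sup>n\<^sub>j\<rangle> = \<delta>\<^sub>i\<^sub>j\<close> as soon as its moments are \<open>\<langle>p, x^k\<rangle> = (-i)\<^sub>k / (-n)\<^sub>k\<close>
  (\<open>k \<le> n\<close>).  We verify these "dual moments" for both coefficient formulas: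
  \<^item> the Bernstein transform of a Hahn polynomial in \<open>j\<close> is a terminating \<open>\<^sub>2F\<^sub>1\<close>
    (a shifted Jacobi polynomial) in \<open>x\<close> or in \<open>1 - x\<close>;
  \<^item> the moments of those polynomials are Beta integrals summed by Chu--Vandermonde;
  \<^item> for the first formula the remaining double sum collapses by a telescoping
    orthogonality relation, for the second by one more Vandermonde sum.
  Uniqueness needs no positivity: the first formula provides, for every \<open>i\<close>, a polynomial
  with the dual moments, so its coefficient matrix is a left inverse of the symmetric Gram
  matrix of the Bernstein basis; this pins down \<open>D\<^sup>n\<^sub>i\<close> and forces the two formulas to agree.
\<close>

text \<open>
  For \<open>a, b > -1\<close> the weighted integral of a polynomial against
  \<open>(1 - x)^a x^b\<close> over \<open>[0,1]\<close> is a linear functional determined by the Beta integrals of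
  the monomials.
\<close>

definition jacobi_integral :: "real \<Rightarrow> real \<Rightarrow> real poly \<Rightarrow> real" where
  "jacobi_integral a b R = (\<Sum>k\<le>degree R. coeff R k * Beta (a + 1) (b + real k + 1))"

lemma jacobi_weight_monomial:
  fixes a b :: real
  assumes a: "a > -1" and b: "b > -1"
  shows "set_integrable lborel {0..1} (\<lambda>x. (1 - x) powr a * x powr b * ((1 - x) ^ r * x ^ k))"
    and "(LINT x:{0..1}|lborel. (1 - x) powr a * x powr b * ((1 - x) ^ r * x ^ k))
           = Beta (a + real r + 1) (b + real k + 1)"
proof -
  have powr_power: "y powr c * y ^ m = y powr (c + real m)" if "y \<ge> 0" for y c :: real and m
    using that by (cases "y = 0") (simp_all add: powr_add powr_realpow)
  have eq: "(1 - x) powr a * x powr b * ((1 - x) ^ r * x ^ k)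
      = x powr ((b + real k + 1) - 1) * (1 - x) powr ((a + real r + 1) - 1)" if "x \<in> {0..1}" for x
    using that powr_power[of "1 - x" a r] powr_power[of x b k] by (simp add: ac_simps)
  have pa: "a + real r + 1 > 0" and pb: "b + real k + 1 > 0" using a b by auto
  have I: "set_integrable lborel {0..1}
      (\<lambda>x. x powr ((b + real k + 1) - 1) * (1 - x) powr ((a + real r + 1) - 1))"
    using integrable_Beta[OF pb pa] .
  show "set_integrable lborel {0..1} (\<lambda>x. (1 - x) powr a * x powr b * ((1 - x) ^ r * x ^ k))"
    using I by (subst set_integrable_cong[OF refl refl eq]) auto
  have "(LINT x:{0..1}|lborel. (1 - x) powr a * x powr b * ((1 - x) ^ r * x ^ k))
      = (LINT x:{0..1}|lborel. x powr ((b + real k + 1) - 1) * (1 - x) powr ((a + real r + 1) - 1))"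
    using eq by (intro set_lebesgue_integral_cong) auto
  also have "\<dots> = integral {0..1} (\<lambda>x. x powr ((b + real k + 1) - 1) * (1 - x) powr ((a + real r + 1) - 1))"
    using set_borel_integral_eq_integral(2)[OF I] .
  also have "\<dots> = Beta (b + real k + 1) (a + real r + 1)"
    using has_integral_Beta_real[OF pb pa] by (rule integral_unique)
  finally show "(LINT x:{0..1}|lborel. (1 - x) powr a * x powr b * ((1 - x) ^ r * x ^ k))
           = Beta (a + real r + 1) (b + real k + 1)" by (simp add: Beta_commute)
qed

lemma jacobi_integral_eq_integral:
  fixes a b :: real
  assumes a: "a > -1" and b: "b > -1"
  shows "(LINT x:{0..1}|lborel. (1 - x) powr a * x powr b * poly R x) = jacobi_integral a b R"
proof -
  define w where "w k x = indicator {0..1} x *\<^sub>R ((1 - x) powr a * x powr b * ((1 - x) ^ 0 * x ^ k))"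
    for k and x :: real
  have int: "integrable lborel (\<lambda>x. coeff R k * w k x)" for k
    using jacobi_weight_monomial(1)[OF a b, of 0 k]
    unfolding set_integrable_def w_def by (intro integrable_mult_right) auto
  have "(LINT x:{0..1}|lborel. (1 - x) powr a * x powr b * poly R x)
      = integral\<^sup>L lborel (\<lambda>x. \<Sum>k\<le>degree R. coeff R k * w k x)"
    unfolding set_lebesgue_integral_def w_def
    by (simp add: poly_altdef scaleR_sum_right sum_distrib_left ac_simps)
  also have "\<dots> = (\<Sum>k\<le>degree R. coeff R k * integral\<^sup>L lborel (w k))"
    using int by (simp add: Bochner_Integration.integral_sum)
  also have "\<dots> = jacobi_integral a b R"
    unfolding jacobi_integral_def w_def
    using jacobi_weight_monomial(2)[OF a b, of 0] by (simp add: set_lebesgue_integral_def)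
  finally show ?thesis .
qed

lemma jinner_poly:
  assumes "a > -1" "b > -1"
  shows "jinner a b (poly P) (poly Q) = jacobi_integral a b (P * Q)"
  unfolding jinner_def using jacobi_integral_eq_integral[OF assms, of "P * Q"] by (simp add: ac_simps)

lemma jacobi_integral_bound:
  assumes "degree R \<le> N"
  shows "jacobi_integral a b R = (\<Sum>k\<le>N. coeff R k * Beta (a + 1) (b + real k + 1))"
  unfolding jacobi_integral_def using assms
  by (intro sum.mono_neutral_left) (auto simp: coeff_eq_0)

lemma jacobi_integral_add: "jacobi_integral a b (P + Q) = jacobi_integral a b P + jacobi_integral a b Q"
proof -
  let ?N = "max (degree P) (degree Q)"
  have "degree (P + Q) \<le> ?N" by (rule degree_add_le_max)
  then show ?thesis
    by (simp add: jacobi_integral_bound[of _ ?N] jacobi_integral_bound[of P ?N]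
        jacobi_integral_bound[of Q ?N] algebra_simps sum.distrib)
qed

lemma jacobi_integral_smult: "jacobi_integral a b (smult c P) = c * jacobi_integral a b P"
  by (simp add: jacobi_integral_bound[of _ "degree P"] jacobi_integral_bound[of P "degree P"]
      sum_distrib_left ac_simps)

lemma jacobi_integral_sum:
  "finite A \<Longrightarrow> jacobi_integral a b (\<Sum>i\<in>A. f i) = (\<Sum>i\<in>A. jacobi_integral a b (f i))"
  by (induction A rule: finite_induct) (simp_all add: jacobi_integral_add, simp add: jacobi_integral_def)

lemma jacobi_integral_monomial:
  assumes "a > -1" "b > -1"
  shows "jacobi_integral a b ([:1, -1:] ^ r * monom 1 k) = Beta (a + real r + 1) (b + real k + 1)"
  using jacobi_weight_monomial(2)[OF assms, of r k]
    jacobi_integral_eq_integral[OF assms, of "[:1, -1:] ^ r * monom 1 k"]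
  by (simp add: poly_monom)

definition bernstein_poly :: "nat \<Rightarrow> nat \<Rightarrow> real poly" where
  "bernstein_poly n j = smult (real (n choose j)) (monom 1 j * [:1, -1:] ^ (n - j))"

lemma bernstein_eq_poly: "bernstein n j = poly (bernstein_poly n j)"
  unfolding bernstein_poly_def bernstein_def by (simp add: fun_eq_iff poly_monom)

lemma degree_bernstein_poly:
  assumes "j \<le> n"
  shows "degree (bernstein_poly n j) \<le> n"
proof -
  have "degree (monom (1::real) j * [:1, -1:] ^ (n - j)) \<le> j + (n - j)"
    by (rule order.trans[OF degree_mult_le])
      (intro add_mono degree_monom_le order.trans[OF degree_power_le], simp)
  then show ?thesis unfolding bernstein_poly_def using assms by simp
qed

lemma degree_bernstein_combination: "degree (\<Sum>l\<le>n. smult (b l) (bernstein_poly n l)) \<le> n"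
  by (intro degree_sum_le order.trans[OF degree_smult_le] degree_bernstein_poly) auto

lemma pochhammer_minus_nat: "pochhammer (- real j) r = (-1) ^ r * fact r * real (j choose r)"
proof -
  have "pochhammer (- real j) r = (-1) ^ r * pochhammer (real j - real r + 1) r"
    by (simp add: pochhammer_minus)
  also have "pochhammer (real j - real r + 1) r = fact r * (real j gchoose r)"
    by (simp add: gbinomial_pochhammer')
  finally show ?thesis by (simp add: binomial_gbinomial)
qed

lemma pochhammer_minus_nat_nonzero: "k \<le> n \<Longrightarrow> pochhammer (- real n) k \<noteq> 0"
  using pochhammer_of_nat_eq_0_iff[of n k, where 'a=real] by simp

lemma pochhammer_minus_nat_zero: "n < k \<Longrightarrow> pochhammer (- real n) k = 0"
  using pochhammer_of_nat_eq_0_iff[of n k, where 'a=real] by simp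

lemma bernstein_binomial_sum:
  assumes "r \<le> n"
  shows "(\<Sum>j\<le>n. real (j choose r) * bernstein n j x) = real (n choose r) * x ^ r"
proof -
  have "(\<Sum>j\<le>n. real (j choose r) * bernstein n j x) = (\<Sum>j\<in>{r..n}. real (j choose r) * bernstein n j x)"
    by (intro sum.mono_neutral_right) auto
  also have "\<dots> = (\<Sum>j\<in>{r..n}. real (n choose r) * (real ((n - r) choose (j - r)) * x ^ j * (1 - x) ^ (n - j)))"
  proof (intro sum.cong refl)
    fix j assume j: "j \<in> {r..n}"
    have "real (j choose r) * real (n choose j) = real (n choose r) * real ((n - r) choose (j - r))"
      using choose_mult[of r j n] j by (simp add: mult.commute flip: of_nat_mult)
    then show "real (j choose r) * bernstein n j x
        = real (n choose r) * (real ((n - r) choose (j - r)) * x ^ j * (1 - x) ^ (n - j))"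
      unfolding bernstein_def by (simp add: algebra_simps)
  qed
  also have "\<dots> = real (n choose r) * (\<Sum>t\<in>{0..n-r}. real ((n - r) choose t) * x ^ (t + r) * (1 - x) ^ (n - r - t))"
  proof -
    have "{r..n} = {0 + r..(n - r) + r}" using assms by simp
    then show ?thesis
      by (simp only: sum.shift_bounds_cl_nat_ivl sum_distrib_left)
        (intro sum.cong refl, auto simp: add.commute)
  qed
  also have "(\<Sum>t\<in>{0..n-r}. real ((n - r) choose t) * x ^ (t + r) * (1 - x) ^ (n - r - t))
      = x ^ r * (\<Sum>t\<le>n-r. real ((n - r) choose t) * x ^ t * (1 - x) ^ (n - r - t))"
    by (simp add: sum_distrib_left atLeast0AtMost power_add ac_simps)
  also have "(\<Sum>t\<le>n-r. real ((n - r) choose t) * x ^ t * (1 - x) ^ (n - r - t)) = 1"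
    using binomial_ring[of x "1 - x" "n - r"] by simp
  finally show ?thesis by simp
qed

lemma power_in_bernstein:
  assumes "r \<le> n"
  shows "(\<Sum>j\<le>n. pochhammer (- real j) r * bernstein n j x) = pochhammer (- real n) r * x ^ r"
  using bernstein_binomial_sum[OF assms, of x]
  by (simp add: pochhammer_minus_nat sum_distrib_left[symmetric] mult.assoc)

lemma bernstein_mirror: "j \<le> n \<Longrightarrow> bernstein n (n - j) (1 - x) = bernstein n j x"
  unfolding bernstein_def by (simp add: binomial_symmetric[symmetric] ac_simps)

lemma power_in_bernstein_mirror:
  assumes "r \<le> n"
  shows "(\<Sum>j\<le>n. pochhammer (real j - real n) r * bernstein n j x) = pochhammer (- real n) r * (1 - x) ^ r"
proof -
  have "(\<Sum>j\<le>n. pochhammer (real j - real n) r * bernstein n j x)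
      = (\<Sum>j\<le>n. pochhammer (- real (n - j)) r * bernstein n (n - j) (1 - x))"
    by (intro sum.cong refl) (simp add: bernstein_mirror of_nat_diff)
  also have "\<dots> = (\<Sum>j\<le>n. pochhammer (- real j) r * bernstein n j (1 - x))"
    by (rule sum.reindex_bij_witness[where i="\<lambda>j. n - j" and j="\<lambda>j. n - j"]) auto
  finally show ?thesis using power_in_bernstein[OF assms] by simp
qed

lemma bernstein_span:
  assumes "degree q \<le> n"
  obtains b where "q = (\<Sum>l\<le>n. smult (b l) (bernstein_poly n l))"
proof
  define b where "b l = (\<Sum>k\<le>n. coeff q k * (pochhammer (- real l) k / pochhammer (- real n) k))" for l
  have "poly q x = poly (\<Sum>l\<le>n. smult (b l) (bernstein_poly n l)) x" for x
  proof -
    have "poly q x = (\<Sum>k\<le>n. coeff q k * x ^ k)"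
      unfolding poly_altdef using assms by (intro sum.mono_neutral_left) (auto simp: coeff_eq_0)
    also have "\<dots> = (\<Sum>k\<le>n. \<Sum>l\<le>n. coeff q k * (pochhammer (- real l) k / pochhammer (- real n) k) * bernstein n l x)"
    proof (intro sum.cong refl)
      fix k assume "k \<in> {..n}"
      then have k: "k \<le> n" by simp
      have "x ^ k = (\<Sum>l\<le>n. pochhammer (- real l) k * bernstein n l x) / pochhammer (- real n) k"
        using power_in_bernstein[OF k, of x] pochhammer_minus_nat_nonzero[OF k] by simp
      then show "coeff q k * x ^ k
          = (\<Sum>l\<le>n. coeff q k * (pochhammer (- real l) k / pochhammer (- real n) k) * bernstein n l x)"
        by (simp add: sum_distrib_left sum_divide_distrib mult_ac)
    qed
    also have "\<dots> = (\<Sum>l\<le>n. b l * bernstein n l x)"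
      unfolding b_def by (subst sum.swap) (simp add: sum_distrib_right)
    finally show ?thesis by (simp add: poly_sum bernstein_eq_poly)
  qed
  then show "q = (\<Sum>l\<le>n. smult (b l) (bernstein_poly n l))"
    by (simp add: poly_eq_poly_eq_iff[symmetric] fun_eq_iff)
qed

lemma bernstein_poly_expand:
  "bernstein_poly n j = (\<Sum>l\<le>n - j. smult (real (n choose j) * real ((n - j) choose l) * (-1) ^ l) (monom 1 (j + l)))"
proof -
  have "(1 - x) ^ (n - j) = (\<Sum>l\<le>n - j. real ((n - j) choose l) * (-1) ^ l * x ^ l)" for x :: real
    using binomial_ring[of "- x" 1 "n - j"] by (simp add: power_minus[of x] mult_ac)
  then have "poly (bernstein_poly n j) x
      = poly (\<Sum>l\<le>n - j. smult (real (n choose j) * real ((n - j) choose l) * (-1) ^ l) (monom 1 (j + l))) x" for x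
    by (simp add: bernstein_eq_poly[symmetric] bernstein_def poly_sum poly_monom sum_distrib_left power_add mult_ac)
  then show ?thesis by (simp add: poly_eq_poly_eq_iff[symmetric] fun_eq_iff)
qed

lemma monom_expand_mirror:
  "monom (1::real) k = (\<Sum>l\<le>k. smult (real (k choose l) * (-1) ^ l) ([:1, -1:] ^ l))"
proof -
  have "x ^ k = (\<Sum>l\<le>k. real (k choose l) * (-1) ^ l * (1 - x) ^ l)" for x :: real
  proof -
    have "(x - 1) ^ l = (-1) ^ l * (1 - x) ^ l" for l
      by (simp flip: power_mult_distrib)
    then show ?thesis using binomial_ring[of "x - 1" 1 k] by (simp add: mult.assoc)
  qed
  then show ?thesis
    by (simp add: poly_eq_poly_eq_iff[symmetric] fun_eq_iff poly_sum poly_monom)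
qed

definition bernstein_comb :: "nat \<Rightarrow> (nat \<Rightarrow> real) \<Rightarrow> real poly" where
  "bernstein_comb n b = (\<Sum>l\<le>n. smult (b l) (bernstein_poly n l))"

lemma poly_bernstein_comb: "poly (bernstein_comb n b) x = (\<Sum>j\<le>n. b j * bernstein n j x)"
  unfolding bernstein_comb_def by (simp add: poly_sum bernstein_eq_poly)

definition dual_moments :: "real \<Rightarrow> real \<Rightarrow> nat \<Rightarrow> nat \<Rightarrow> real poly \<Rightarrow> bool" where
  "dual_moments \<alpha> \<beta> n i p \<longleftrightarrow>
     (\<forall>k\<le>n. jacobi_integral \<alpha> \<beta> (p * monom 1 k) = pochhammer (- real i) k / pochhammer (- real n) k)"

lemma binomial_product_reindex:
  "(i choose (j + l)) * ((j + l) choose j) = (i choose j) * ((i - j) choose l)"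
proof (cases "j + l \<le> i")
  case True then show ?thesis using choose_mult[of j "j + l" i] by simp
next
  case False then show ?thesis by (cases "j \<le> i") (auto simp: binomial_eq_0)
qed

lemma dual_moments_biorthogonal:
  assumes mom: "dual_moments \<alpha> \<beta> n i p" and j: "j \<le> n" and i: "i \<le> n"
  shows "jacobi_integral \<alpha> \<beta> (p * bernstein_poly n j) = (if i = j then 1 else 0)"
proof -
  have "jacobi_integral \<alpha> \<beta> (p * bernstein_poly n j) = (\<Sum>l\<le>n - j.
      real (n choose j) * real ((n - j) choose l) * (-1) ^ l * jacobi_integral \<alpha> \<beta> (p * monom 1 (j + l)))"
    by (simp add: bernstein_poly_expand sum_distrib_left jacobi_integral_sum jacobi_integral_smult)
  also have "\<dots> = (\<Sum>l\<le>n - j. real (i choose j) * ((-1) ^ l * real ((i - j) choose l)))"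
  proof (intro sum.cong refl)
    fix l assume "l \<in> {..n - j}"
    then have t: "j + l \<le> n" using j by simp
    have c1: "real (n choose (j + l)) * real ((j + l) choose j) = real (n choose j) * real ((n - j) choose l)"
      using choose_mult[of j "j + l" n] t by (simp flip: of_nat_mult)
    have c2: "real (i choose (j + l)) * real ((j + l) choose j) = real (i choose j) * real ((i - j) choose l)"
      using binomial_product_reindex[of i j l] by (simp flip: of_nat_mult)
    have ratio: "pochhammer (- real i) (j + l) / pochhammer (- real n) (j + l)
        = real (i choose (j + l)) / real (n choose (j + l))"
      using t by (simp add: pochhammer_minus_nat)
    have nz: "real (n choose (j + l)) \<noteq> 0" using t by simp
    have mom_jl: "jacobi_integral \<alpha> \<beta> (p * monom 1 (j + l)) = real (i choose (j + l)) / real (n choose (j + l))"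
      using mom t unfolding dual_moments_def ratio[symmetric] by simp
    have "real (n choose j) * real ((n - j) choose l) * (-1) ^ l * jacobi_integral \<alpha> \<beta> (p * monom 1 (j + l))
        = (-1) ^ l * (real (n choose (j + l)) * real ((j + l) choose j))
            * (real (i choose (j + l)) / real (n choose (j + l)))"
      unfolding mom_jl c1[symmetric] by (simp add: mult_ac)
    also have "\<dots> = (-1) ^ l * (real (i choose (j + l)) * real ((j + l) choose j))"
      using nz by (simp add: field_simps)
    finally show "real (n choose j) * real ((n - j) choose l) * (-1) ^ l * jacobi_integral \<alpha> \<beta> (p * monom 1 (j + l))
        = real (i choose j) * ((-1) ^ l * real ((i - j) choose l))"
      unfolding c2 by (simp add: mult_ac)
  qed
  also have "\<dots> = (if i = j then 1 else 0)"
  proof (cases "j \<le> i")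
    case False
    then show ?thesis by (simp add: binomial_eq_0)
  next
    case True
    have "(\<Sum>l\<le>n - j. (-1) ^ l * real ((i - j) choose l)) = (\<Sum>l\<le>i - j. (-1) ^ l * real ((i - j) choose l))"
      using i by (intro sum.mono_neutral_right) auto
    also have "\<dots> = (if i = j then 1 else 0)"
      using True choose_alternating_sum[of "i - j", where 'a=real] by auto
    finally show ?thesis by (simp flip: sum_distrib_left)
  qed
  finally show ?thesis .
qed

lemma sum_delta_mult:
  fixes n :: nat
  assumes "i \<le> n"
  shows "(\<Sum>j\<le>n. f j * (if i = j then c else 0)) = (f i * c :: real)"
proof -
  have "(\<Sum>j\<le>n. f j * (if i = j then c else 0)) = (\<Sum>j\<in>{i}. f j * (if i = j then c else 0))"
    using assms by (intro sum.mono_neutral_right) auto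
  then show ?thesis by simp
qed

definition bernstein_gram :: "real \<Rightarrow> real \<Rightarrow> nat \<Rightarrow> nat \<Rightarrow> nat \<Rightarrow> real" where
  "bernstein_gram \<alpha> \<beta> n l j = jacobi_integral \<alpha> \<beta> (bernstein_poly n l * bernstein_poly n j)"

lemma jacobi_integral_bernstein_comb:
  "jacobi_integral \<alpha> \<beta> (bernstein_comb n b * bernstein_poly n j) = (\<Sum>l\<le>n. b l * bernstein_gram \<alpha> \<beta> n l j)"
  unfolding bernstein_gram_def bernstein_comb_def
  by (simp add: sum_distrib_right jacobi_integral_sum jacobi_integral_smult)

lemma left_inverse_row_unique:
  fixes G D :: "nat \<Rightarrow> nat \<Rightarrow> real"
  assumes sym: "\<And>l j. G l j = G j l"
    and inv: "\<And>i j. i \<le> n \<Longrightarrow> j \<le> n \<Longrightarrow> (\<Sum>l\<le>n. D i l * G l j) = (if i = j then 1 else 0)"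
    and sol: "\<And>j. j \<le> n \<Longrightarrow> (\<Sum>l\<le>n. b l * G l j) = (if i = j then 1 else 0)"
    and i: "i \<le> n" and m: "m \<le> n"
  shows "b m = D i m"
proof -
  have transposed: "c m = D m i"
    if c: "\<And>j. j \<le> n \<Longrightarrow> (\<Sum>l\<le>n. c l * G l j) = (if i = j then 1 else 0)" for c
  proof -
    have "c m = (\<Sum>l\<le>n. c l * (if m = l then 1 else 0))"
      using m by (simp add: sum_delta_mult)
    also have "\<dots> = (\<Sum>l\<le>n. c l * (\<Sum>j\<le>n. D m j * G j l))"
      using inv[OF m] by simp
    also have "\<dots> = (\<Sum>l\<le>n. \<Sum>j\<le>n. D m j * (c l * G l j))"
      by (simp add: sum_distrib_left sym mult_ac)
    also have "\<dots> = (\<Sum>j\<le>n. D m j * (\<Sum>l\<le>n. c l * G l j))"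
      by (subst sum.swap) (simp add: sum_distrib_left)
    also have "\<dots> = (\<Sum>j\<le>n. D m j * (if i = j then 1 else 0))"
      using c by simp
    also have "\<dots> = D m i"
      using i by (simp add: sum_delta_mult)
    finally show ?thesis .
  qed
  have "D i m = D m i" using transposed[of "D i"] inv[OF i] by blast
  with transposed[OF sol] show ?thesis by simp
qed

lemma dual_moments_coefficients_unique:
  assumes D: "\<And>i. i \<le> n \<Longrightarrow> dual_moments \<alpha> \<beta> n i (bernstein_comb n (D i))"
    and b: "\<And>j. j \<le> n \<Longrightarrow> jacobi_integral \<alpha> \<beta> (bernstein_comb n b * bernstein_poly n j) = (if i = j then 1 else 0)"
    and i: "i \<le> n" and m: "m \<le> n"
  shows "b m = D i m"
proof (rule left_inverse_row_unique[where G = "bernstein_gram \<alpha> \<beta> n"])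
  show "bernstein_gram \<alpha> \<beta> n l j = bernstein_gram \<alpha> \<beta> n j l" for l j
    unfolding bernstein_gram_def by (simp add: mult.commute)
  show "(\<Sum>l\<le>n. D i' l * bernstein_gram \<alpha> \<beta> n l j) = (if i' = j then 1 else 0)"
    if "i' \<le> n" "j \<le> n" for i' j
    using dual_moments_biorthogonal[OF D[OF that(1)] that(2,1)]
    by (simp add: jacobi_integral_bernstein_comb)
  show "(\<Sum>l\<le>n. b l * bernstein_gram \<alpha> \<beta> n l j) = (if i = j then 1 else 0)" if "j \<le> n" for j
    using b[OF that] by (simp add: jacobi_integral_bernstein_comb)
qed (use i m in auto)

lemma dual_bernstein_eq_comb:
  assumes a: "\<alpha> > -1" and b: "\<beta> > -1"
    and D: "\<And>i. i \<le> n \<Longrightarrow> dual_moments \<alpha> \<beta> n i (bernstein_comb n (D i))"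
    and i: "i \<le> n"
  shows "dual_bernstein n \<alpha> \<beta> i = bernstein_comb n (D i)"
  unfolding dual_bernstein_def
proof (rule the_equality)
  have "jinner \<alpha> \<beta> (poly (bernstein_comb n (D i))) (bernstein n j) = (if i = j then 1 else 0)"
    if "j \<le> n" for j
    using dual_moments_biorthogonal[OF D[OF i] that i]
    by (simp add: bernstein_eq_poly jinner_poly[OF a b])
  then show "degree (bernstein_comb n (D i)) \<le> n \<and>
      (\<forall>j\<le>n. jinner \<alpha> \<beta> (poly (bernstein_comb n (D i))) (bernstein n j) = (if i = j then 1 else 0))"
    by (simp add: bernstein_comb_def degree_bernstein_combination)
next
  fix q assume q: "degree q \<le> n \<and> (\<forall>j\<le>n. jinner \<alpha> \<beta> (poly q) (bernstein n j) = (if i = j then 1 else 0))"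
  then obtain c where qc: "q = bernstein_comb n c"
    unfolding bernstein_comb_def by (auto elim: bernstein_span)
  have "c m = D i m" if "m \<le> n" for m
  proof (rule dual_moments_coefficients_unique[OF D _ i that])
    show "jacobi_integral \<alpha> \<beta> (bernstein_comb n c * bernstein_poly n j) = (if i = j then 1 else 0)"
      if "j \<le> n" for j
      using q that by (simp add: qc bernstein_eq_poly jinner_poly[OF a b])
  qed
  then show "q = bernstein_comb n (D i)"
    unfolding qc bernstein_comb_def by (intro sum.cong) auto
qed

lemma Beta_shift_left:
  assumes x: "x > 0" and y: "y > 0"
  shows "Beta (x + real l) y = Beta x y * pochhammer x l / pochhammer (x + y) l"
proof (induction l)
  case 0 then show ?case by simp
next
  case (Suc l)
  have xl: "x + real l > 0" using x by simp
  then have "x + real l \<notin> \<int>\<^sub>\<le>\<^sub>0" by (auto elim!: nonpos_Ints_cases)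
  then have "(x + real l + y) * Beta (x + real l + 1) y = (x + real l) * Beta (x + real l) y"
    by (rule Beta_plus1_left)
  moreover have "pochhammer (x + y) l > 0" using x y by (intro pochhammer_pos) simp
  moreover have "x + real l + y > 0" using xl y by simp
  ultimately have "Beta (x + real l + 1) y = (x + real l) / (x + real l + y) * Beta (x + real l) y"
    by (simp add: field_simps)
  also have "\<dots> = Beta x y * pochhammer x (Suc l) / pochhammer (x + y) (Suc l)"
    using Suc by (simp add: pochhammer_Suc add_ac mult_ac)
  finally show ?case by (simp add: add_ac)
qed

lemma chu_vandermonde:
  fixes a c :: real
  assumes "\<And>i. i < N \<Longrightarrow> c \<noteq> - real i"
  shows "(\<Sum>t\<le>N. pochhammer a t * pochhammer (- real N) t / (fact t * pochhammer c t))
       = pochhammer (c - a) N / pochhammer c N"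
  using Vandermonde_pochhammer[of N c a] assms by (simp add: atLeast0AtMost)

lemma sum_shift_from:
  fixes f :: "nat \<Rightarrow> real"
  assumes "m \<le> k" "\<And>l. l < m \<Longrightarrow> f l = 0"
  shows "(\<Sum>l\<le>k. f l) = (\<Sum>t\<le>k - m. f (m + t))"
proof -
  have "(\<Sum>l\<le>k. f l) = (\<Sum>l\<in>{m..k}. f l)"
    using assms by (intro sum.mono_neutral_right) auto
  also have "{m..k} = {0 + m..(k - m) + m}" using assms by simp
  also have "(\<Sum>l\<in>{0 + m..(k - m) + m}. f l) = (\<Sum>t\<in>{0..k - m}. f (t + m))"
    by (rule sum.shift_bounds_cl_nat_ivl)
  finally show ?thesis by (simp add: atLeast0AtMost add.commute)
qed

text \<open>
  The Hahn
  polynomial is \<open>Q\<^sub>m(x; A, B, N) = \<Sum>\<^sub>r hahn_coeff A B m r (-x)\<^sub>r / (-N)\<^sub>r\<close>, and its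
  Bernstein transform is the Jacobi-type polynomial \<open>\<Sum>\<^sub>r hahn_coeff A B m r q^r\<close>.
\<close>
definition hahn_coeff :: "real \<Rightarrow> real \<Rightarrow> nat \<Rightarrow> nat \<Rightarrow> real" where
  "hahn_coeff A B m r = pochhammer (- real m) r * pochhammer (real m + A + B + 1) r / (fact r * pochhammer (A + 1) r)"

definition jacobi_hyp :: "real \<Rightarrow> real \<Rightarrow> nat \<Rightarrow> real poly \<Rightarrow> real poly" where
  "jacobi_hyp A B m q = (\<Sum>r\<le>m. smult (hahn_coeff A B m r) (q ^ r))"

lemma hahnQ_hahn_coeff:
  "hahnQ m x A B N = (\<Sum>r\<le>m. hahn_coeff A B m r / pochhammer (- real N) r * pochhammer (- x) r)"
  unfolding hahnQ_def hahn_coeff_def by (intro sum.cong refl) (simp add: field_simps)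

lemma hahnQ_bernstein_sum:
  assumes "m \<le> n"
  shows "(\<Sum>j\<le>n. hahnQ m (real j) A B n * bernstein n j x) = poly (jacobi_hyp A B m [:0, 1:]) x"
proof -
  have "(\<Sum>j\<le>n. hahnQ m (real j) A B n * bernstein n j x)
      = (\<Sum>r\<le>m. hahn_coeff A B m r / pochhammer (- real n) r * (\<Sum>j\<le>n. pochhammer (- real j) r * bernstein n j x))"
    unfolding hahnQ_hahn_coeff sum_distrib_right sum_distrib_left
    by (subst sum.swap) (simp add: mult_ac)
  also have "\<dots> = (\<Sum>r\<le>m. hahn_coeff A B m r * x ^ r)"
    using assms by (intro sum.cong refl) (simp add: power_in_bernstein pochhammer_minus_nat_nonzero)
  finally show ?thesis by (simp add: jacobi_hyp_def poly_sum)
qed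

lemma hahnQ_bernstein_sum_mirror:
  assumes "m \<le> n"
  shows "(\<Sum>j\<le>n. hahnQ m (real n - real j) A B n * bernstein n j x) = poly (jacobi_hyp A B m [:1, -1:]) x"
proof -
  have "(\<Sum>j\<le>n. hahnQ m (real n - real j) A B n * bernstein n j x)
      = (\<Sum>r\<le>m. hahn_coeff A B m r / pochhammer (- real n) r * (\<Sum>j\<le>n. pochhammer (real j - real n) r * bernstein n j x))"
    unfolding hahnQ_hahn_coeff sum_distrib_right sum_distrib_left
    by (subst sum.swap) (simp add: mult_ac)
  also have "\<dots> = (\<Sum>r\<le>m. hahn_coeff A B m r * (1 - x) ^ r)"
    using assms by (intro sum.cong refl) (simp add: power_in_bernstein_mirror pochhammer_minus_nat_nonzero)
  finally show ?thesis by (simp add: jacobi_hyp_def poly_sum)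
qed

lemma hahn_coeff_Beta_sum:
  assumes A: "A > -1" and C: "C > -1"
  shows "(\<Sum>r\<le>m. hahn_coeff A B m r * Beta (A + real r + 1) (C + 1))
       = Beta (A + 1) (C + 1) * (pochhammer (C - B + 1 - real m) m / pochhammer (A + C + 2) m)"
proof -
  have "(\<Sum>r\<le>m. hahn_coeff A B m r * Beta (A + real r + 1) (C + 1))
      = Beta (A + 1) (C + 1) * (\<Sum>r\<le>m. pochhammer (real m + A + B + 1) r * pochhammer (- real m) r
          / (fact r * pochhammer (A + C + 2) r))"
  proof -
    have "hahn_coeff A B m r * Beta (A + real r + 1) (C + 1) = Beta (A + 1) (C + 1) *
        (pochhammer (real m + A + B + 1) r * pochhammer (- real m) r / (fact r * pochhammer (A + C + 2) r))" for r
    proof -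
      have "Beta (A + 1 + real r) (C + 1) = Beta (A + 1) (C + 1) * pochhammer (A + 1) r / pochhammer (A + C + 2) r"
        using Beta_shift_left[of "A + 1" "C + 1" r] A C by (simp add: add_ac)
      moreover have "pochhammer (A + 1) r > 0" using A by (intro pochhammer_pos) simp
      ultimately show ?thesis unfolding hahn_coeff_def by (simp add: field_simps add_ac)
    qed
    then show ?thesis by (simp add: sum_distrib_left)
  qed
  also have "(\<Sum>r\<le>m. pochhammer (real m + A + B + 1) r * pochhammer (- real m) r / (fact r * pochhammer (A + C + 2) r))
      = pochhammer ((A + C + 2) - (real m + A + B + 1)) m / pochhammer (A + C + 2) m"
    using A C by (intro chu_vandermonde) auto
  also have "(A + C + 2) - (real m + A + B + 1) = C - B + 1 - real m" by simp
  finally show ?thesis .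
qed

text \<open>
  Against \<open>(1-x)^l\<close> they follow from
  Chu--Vandermonde; against \<open>x^k\<close> from the binomial expansion of \<open>x^k\<close> in powers of \<open>1-x\<close>
  and a second Vandermonde summation.
\<close>

lemma jacobi_hyp_moment_mirror:
  assumes a: "\<alpha> > -1" and b: "\<beta> > -1"
  shows "jacobi_integral \<alpha> \<beta> (jacobi_hyp \<beta> \<alpha> m [:0, 1:] * [:1, -1:] ^ l)
       = Beta (\<alpha> + 1) (\<beta> + 1) * pochhammer (\<alpha> + 1) l / pochhammer (\<alpha> + \<beta> + 2) l
          * (pochhammer (real l + 1 - real m) m / pochhammer (\<alpha> + \<beta> + real l + 2) m)"
proof -
  have "jacobi_integral \<alpha> \<beta> (jacobi_hyp \<beta> \<alpha> m [:0, 1:] * [:1, -1:] ^ l)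
      = (\<Sum>r\<le>m. hahn_coeff \<beta> \<alpha> m r * Beta (\<alpha> + real l + 1) (\<beta> + real r + 1))"
    by (simp add: jacobi_hyp_def sum_distrib_right jacobi_integral_sum jacobi_integral_smult
        monom_altdef[of 1, simplified, symmetric] mult.commute[of "monom 1 _"]
        jacobi_integral_monomial[OF a b])
  also have "\<dots> = (\<Sum>r\<le>m. hahn_coeff \<beta> \<alpha> m r * Beta (\<beta> + real r + 1) ((\<alpha> + real l) + 1))"
    by (simp add: Beta_commute add_ac)
  also have "\<dots> = Beta (\<beta> + 1) (\<alpha> + real l + 1)
      * (pochhammer (real l + 1 - real m) m / pochhammer (\<alpha> + \<beta> + real l + 2) m)"
    using hahn_coeff_Beta_sum[of \<beta> "\<alpha> + real l" \<alpha> m] a b by (simp add: add_ac)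
  also have "Beta (\<beta> + 1) (\<alpha> + real l + 1) = Beta (\<alpha> + 1) (\<beta> + 1) * pochhammer (\<alpha> + 1) l / pochhammer (\<alpha> + \<beta> + 2) l"
    using Beta_shift_left[of "\<alpha> + 1" "\<beta> + 1" l] a b by (simp add: Beta_commute add_ac)
  finally show ?thesis .
qed

lemma alternating_sum_term:
  fixes a s :: real
  assumes s: "s > 0" and tk: "m + t \<le> k"
  shows "real (k choose (m + t)) * (-1) ^ (m + t) * (pochhammer a (m + t) / pochhammer s (m + t)
          * (pochhammer (real (m + t) + 1 - real m) m / pochhammer (s + real (m + t)) m))
       = pochhammer (- real k) m * pochhammer a m / pochhammer s (2 * m)
          * (pochhammer (a + real m) t * pochhammer (- real (k - m)) t / (fact t * pochhammer (s + real (2 * m)) t))"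
proof -
  have c1: "real (k choose (m + t)) * real ((m + t) choose m) = real (k choose m) * real ((k - m) choose t)"
    using choose_mult[of m "m + t" k] tk by (simp flip: of_nat_mult)
  have p1: "pochhammer (real (m + t) + 1 - real m) m = fact m * real ((m + t) choose m)"
  proof -
    have "real ((m + t) choose m) = real (m + t) gchoose m" by (simp add: binomial_gbinomial)
    also have "\<dots> = pochhammer (real (m + t) - real m + 1) m / fact m" by (rule gbinomial_pochhammer')
    finally show ?thesis by (simp add: add_ac)
  qed
  have p4: "pochhammer a (m + t) = pochhammer a m * pochhammer (a + real m) t"
    by (rule pochhammer_product')
  have p5: "pochhammer s (m + t) * pochhammer (s + real (m + t)) m = pochhammer s (2 * m) * pochhammer (s + real (2 * m)) t"
  proof -
    have "pochhammer s (m + t) * pochhammer (s + real (m + t)) m = pochhammer s (m + t + m)"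
      by (rule pochhammer_product'[symmetric])
    also have "m + t + m = 2 * m + t" by simp
    also have "pochhammer s (2 * m + t) = pochhammer s (2 * m) * pochhammer (s + real (2 * m)) t"
      by (rule pochhammer_product')
    finally show ?thesis .
  qed
  have pos: "pochhammer s (m + t) > 0" "pochhammer (s + real (m + t)) m > 0" "pochhammer s (2 * m) > 0"
    "pochhammer (s + real (2 * m)) t > 0"
    using s by (auto intro!: pochhammer_pos)
  have "real (k choose (m + t)) * (-1) ^ (m + t) * (pochhammer a (m + t) / pochhammer s (m + t)
          * (pochhammer (real (m + t) + 1 - real m) m / pochhammer (s + real (m + t)) m))
      = (-1) ^ (m + t) * (real (k choose (m + t)) * real ((m + t) choose m)) * fact m * pochhammer a (m + t)
        / (pochhammer s (m + t) * pochhammer (s + real (m + t)) m)"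
    unfolding p1 using pos by (simp add: field_simps)
  also have "\<dots> = pochhammer (- real k) m * pochhammer a m / pochhammer s (2 * m)
          * (pochhammer (a + real m) t * pochhammer (- real (k - m)) t / (fact t * pochhammer (s + real (2 * m)) t))"
    unfolding c1 p5 p4 pochhammer_minus_nat using pos by (simp add: field_simps power_add)
  finally show ?thesis .
qed

lemma alternating_sum:
  fixes a s :: real
  assumes s: "s > 0" and sa: "s - a > 0"
  shows "(\<Sum>l\<le>k. real (k choose l) * (-1) ^ l * (pochhammer a l / pochhammer s l
          * (pochhammer (real l + 1 - real m) m / pochhammer (s + real l) m)))
       = pochhammer (s - a) k / pochhammer s k * (pochhammer a m * pochhammer (- real k) m
          / (pochhammer (s - a) m * pochhammer (s + real k) m))"
proof (cases "k < m")
  case True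
  have "pochhammer (real l + 1 - real m) m = 0" if "l \<le> k" for l
    unfolding pochhammer_eq_0_iff using that True by (intro exI[of _ "m - l - 1"]) auto
  then show ?thesis using True by (simp add: pochhammer_minus_nat_zero)
next
  case False
  then have mk: "m \<le> k" by simp
  define T0 where "T0 = pochhammer (- real k) m * pochhammer a m / pochhammer s (2 * m)"
  let ?f = "\<lambda>l. real (k choose l) * (-1) ^ l * (pochhammer a l / pochhammer s l
          * (pochhammer (real l + 1 - real m) m / pochhammer (s + real l) m))"
  have z: "?f l = 0" if "l < m" for l
  proof -
    have "pochhammer (real l + 1 - real m) m = 0"
      unfolding pochhammer_eq_0_iff using that by (intro exI[of _ "m - l - 1"]) auto
    then show ?thesis by simp
  qed
  have "(\<Sum>l\<le>k. ?f l) = (\<Sum>t\<le>k - m. ?f (m + t))"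
    by (rule sum_shift_from[OF mk z])
  also have "\<dots> = T0 * (\<Sum>t\<le>k - m. pochhammer (a + real m) t * pochhammer (- real (k - m)) t
      / (fact t * pochhammer (s + real (2 * m)) t))"
    unfolding sum_distrib_left T0_def using mk by (intro sum.cong refl alternating_sum_term[OF s]) auto
  also have "(\<Sum>t\<le>k - m. pochhammer (a + real m) t * pochhammer (- real (k - m)) t / (fact t * pochhammer (s + real (2 * m)) t))
     = pochhammer ((s + real (2 * m)) - (a + real m)) (k - m) / pochhammer (s + real (2 * m)) (k - m)"
    using s by (intro chu_vandermonde) auto
  also have "(s + real (2 * m)) - (a + real m) = s - a + real m" by simp
  finally have L: "(\<Sum>l\<le>k. ?f l) = T0 * (pochhammer (s - a + real m) (k - m) / pochhammer (s + real (2 * m)) (k - m))" .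
  have q1: "pochhammer (s - a) k = pochhammer (s - a) m * pochhammer (s - a + real m) (k - m)"
    by (rule pochhammer_product[OF mk])
  have q2: "pochhammer s (2 * m) * pochhammer (s + real (2 * m)) (k - m) = pochhammer s k * pochhammer (s + real k) m"
  proof -
    have "pochhammer s (2 * m) * pochhammer (s + real (2 * m)) (k - m) = pochhammer s (2 * m + (k - m))"
      by (simp add: pochhammer_product')
    also have "2 * m + (k - m) = k + m" using mk by simp
    also have "pochhammer s (k + m) = pochhammer s k * pochhammer (s + real k) m"
      by (simp add: pochhammer_product')
    finally show ?thesis .
  qed
  have pos: "pochhammer s (2 * m) > 0" "pochhammer (s + real (2 * m)) (k - m) > 0" "pochhammer s k > 0"
      "pochhammer (s + real k) m > 0" "pochhammer (s - a) m > 0"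
    using s sa by (auto intro!: pochhammer_pos)
  show ?thesis
    unfolding L T0_def q1 using q2 pos by (simp add: field_simps)
qed

text \<open>The moments \<open>\<langle>R\<^sub>m, x^k\<rangle>\<close>; note the factor \<open>(-k)\<^sub>m\<close>, which vanishes for \<open>m > k\<close>.\<close>
lemma jacobi_hyp_moment:
  assumes a: "\<alpha> > -1" and b: "\<beta> > -1"
  shows "jacobi_integral \<alpha> \<beta> (jacobi_hyp \<beta> \<alpha> m [:0, 1:] * monom 1 k) = Beta (\<alpha> + 1) (\<beta> + 1) *
      (pochhammer (\<beta> + 1) k / pochhammer (\<alpha> + \<beta> + 2) k * (pochhammer (\<alpha> + 1) m * pochhammer (- real k) m
          / (pochhammer (\<beta> + 1) m * pochhammer (\<alpha> + \<beta> + real k + 2) m)))"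
proof -
  have "jacobi_integral \<alpha> \<beta> (jacobi_hyp \<beta> \<alpha> m [:0, 1:] * monom 1 k)
      = (\<Sum>l\<le>k. real (k choose l) * (-1) ^ l * jacobi_integral \<alpha> \<beta> (jacobi_hyp \<beta> \<alpha> m [:0, 1:] * [:1, -1:] ^ l))"
    by (subst monom_expand_mirror)
      (simp add: sum_distrib_left jacobi_integral_sum jacobi_integral_smult)
  also have "\<dots> = Beta (\<alpha> + 1) (\<beta> + 1) * (\<Sum>l\<le>k. real (k choose l) * (-1) ^ l * (pochhammer (\<alpha> + 1) l
      / pochhammer (\<alpha> + \<beta> + 2) l * (pochhammer (real l + 1 - real m) m / pochhammer ((\<alpha> + \<beta> + 2) + real l) m)))"
    unfolding sum_distrib_left
    by (intro sum.cong refl) (simp add: jacobi_hyp_moment_mirror[OF a b] add_ac)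
  also have "\<dots> = Beta (\<alpha> + 1) (\<beta> + 1) *
      (pochhammer (\<beta> + 1) k / pochhammer (\<alpha> + \<beta> + 2) k * (pochhammer (\<alpha> + 1) m * pochhammer (- real k) m
          / (pochhammer (\<beta> + 1) m * pochhammer (\<alpha> + \<beta> + real k + 2) m)))"
    using alternating_sum[of "\<alpha> + \<beta> + 2" "\<alpha> + 1" k m] a b by (simp add: add_ac)
  finally show ?thesis .
qed
text \<open>
  With \<open>w(\<sigma>, m) = (2m/\<sigma> + 1)(\<sigma>)\<^sub>m\<close>,
  the partial sums of \<open>\<Sum>\<^sub>m w(\<sigma>, m)(m + \<sigma>)\<^sub>r (-k)\<^sub>m / ((m - r)! (\<sigma> + k + 1)\<^sub>m)\<close> telescope,
  so the full sum over \<open>m \<le> n\<close> vanishes unless \<open>r = k\<close>.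
\<close>

lemma hahn_weight_factor_rising: "hahn_weight_factor \<sigma> r * pochhammer (real r + \<sigma>) r = pochhammer (\<sigma> + 1) (2 * r)"
proof (cases r)
  case 0 then show ?thesis by (simp add: hahn_weight_factor_def)
next
  case (Suc q)
  have e: "2 * r = Suc (q + r)" using Suc by simp
  have "pochhammer (\<sigma> + 1) (2 * r) = pochhammer (\<sigma> + 1) (Suc (q + r))"
    by (simp only: e)
  also have "\<dots> = pochhammer (\<sigma> + 1) (q + r) * (\<sigma> + 1 + real (q + r))"
    by (rule pochhammer_Suc)
  also have "pochhammer (\<sigma> + 1) (q + r) = pochhammer (\<sigma> + 1) q * pochhammer (\<sigma> + 1 + real q) r"
    by (rule pochhammer_product')
  finally show ?thesis using Suc
    by (simp add: hahn_weight_factor_def add_ac mult_ac mult_2)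
qed

lemma telescoping_fraction_step:
  fixes A f D c d1 w q p :: real
  assumes "f \<noteq> 0" "D \<noteq> 0" "c \<noteq> 0" "d1 \<noteq> 0" "d1 * c + w * q = p"
  shows "A / (f * D) + w * (A * q) / (f * d1 * (D * c)) = A * p / (f * d1 * (D * c))"
proof -
  have "A / (f * D) = A * (d1 * c) / (f * d1 * (D * c))" using assms by (simp add: field_simps)
  also have "\<dots> + w * (A * q) / (f * d1 * (D * c)) = A * (d1 * c + w * q) / (f * d1 * (D * c))"
    by (simp add: add_divide_distrib algebra_simps)
  finally show ?thesis using assms(5) by simp
qed

lemma hahn_weight_summand:
  fixes \<sigma> :: real and r d :: nat
  defines "u \<equiv> Suc (r + d)"
  shows "hahn_weight_factor \<sigma> u * pochhammer (real u + \<sigma>) r * pochhammer (- real k) u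
            / (fact (u - r) * pochhammer (\<sigma> + real k + 1) u)
       = (2 * real u + \<sigma>) * ((pochhammer (\<sigma> + 1) (2 * r + d) * pochhammer (- real k) r
            * pochhammer (1 + real r - real k) d) * (real r - real k))
            / (fact d * (real d + 1) * (pochhammer (\<sigma> + real k + 1) (r + d) * (\<sigma> + real k + 1 + real (r + d))))"
proof -
  have h1: "hahn_weight_factor \<sigma> u = (2 * real u + \<sigma>) * pochhammer (\<sigma> + 1) (r + d)"
    by (simp add: hahn_weight_factor_def u_def)
  have h2: "pochhammer (\<sigma> + 1) (r + d) * pochhammer (real u + \<sigma>) r = pochhammer (\<sigma> + 1) (2 * r + d)"
  proof -
    have e: "\<sigma> + 1 + real (r + d) = real u + \<sigma>" by (simp add: u_def)
    have "pochhammer (\<sigma> + 1) (r + d + r) = pochhammer (\<sigma> + 1) (r + d) * pochhammer (real u + \<sigma>) r"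
      using pochhammer_product'[of "\<sigma> + 1" "r + d" r] unfolding e .
    moreover have "r + d + r = 2 * r + d" by simp
    ultimately show ?thesis by metis
  qed
  have h3: "pochhammer (- real k) u = pochhammer (- real k) r * ((real r - real k) * pochhammer (1 + real r - real k) d)"
  proof -
    have "pochhammer (- real k) (r + Suc d) = pochhammer (- real k) r * pochhammer (- real k + real r) (Suc d)"
      by (rule pochhammer_product')
    also have "pochhammer (- real k + real r) (Suc d) = (- real k + real r) * pochhammer (- real k + real r + 1) d"
      by (rule pochhammer_rec)
    also have "- real k + real r + 1 = 1 + real r - real k" by simp
    also have "r + Suc d = u" by (simp add: u_def)
    finally show ?thesis by simp
  qed
  have h4: "pochhammer (\<sigma> + real k + 1) u = pochhammer (\<sigma> + real k + 1) (r + d) * (\<sigma> + real k + 1 + real (r + d))"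
    by (simp add: u_def pochhammer_Suc)
  have fu: "fact (u - r) = fact d * (real d + 1)"
    by (simp add: u_def fact_Suc algebra_simps)
  show ?thesis unfolding h3 h4 fu h1 h2[symmetric] by (simp add: mult_ac)
qed

lemma hahn_weight_partial_sum:
  fixes \<sigma> :: real
  assumes s: "\<sigma> > -1"
  shows "(\<Sum>m\<in>{r..r+d}. hahn_weight_factor \<sigma> m * pochhammer (real m + \<sigma>) r * pochhammer (- real k) m
            / (fact (m - r) * pochhammer (\<sigma> + real k + 1) m))
       = pochhammer (\<sigma> + 1) (2 * r + d) * pochhammer (- real k) r * pochhammer (1 + real r - real k) d
            / (fact d * pochhammer (\<sigma> + real k + 1) (r + d))"
proof (induction d)
  case 0
  show ?case using hahn_weight_factor_rising[of \<sigma> r] by simp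
next
  case (Suc d)
  define P where "P = pochhammer (\<sigma> + 1) (2 * r + d) * pochhammer (- real k) r * pochhammer (1 + real r - real k) d"
  have pos: "pochhammer (\<sigma> + real k + 1) (r + d) > 0" "\<sigma> + real k + 1 + real (r + d) > 0"
    using s by (auto intro!: pochhammer_pos)
  have "(\<Sum>m\<in>{r..r + Suc d}. hahn_weight_factor \<sigma> m * pochhammer (real m + \<sigma>) r * pochhammer (- real k) m
            / (fact (m - r) * pochhammer (\<sigma> + real k + 1) m))
     = P / (fact d * pochhammer (\<sigma> + real k + 1) (r + d))
       + (2 * real (Suc (r + d)) + \<sigma>) * (P * (real r - real k))
            / (fact d * (real d + 1) * (pochhammer (\<sigma> + real k + 1) (r + d) * (\<sigma> + real k + 1 + real (r + d))))"
    using Suc.IH hahn_weight_summand[of \<sigma> r d k] by (simp add: P_def)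
  also have "\<dots> = P * ((\<sigma> + 1 + real (2 * r + d)) * (1 + real r - real k + real d))
            / (fact d * (real d + 1) * (pochhammer (\<sigma> + real k + 1) (r + d) * (\<sigma> + real k + 1 + real (r + d))))"
  proof (rule telescoping_fraction_step)
    show "(real d + 1) * (\<sigma> + real k + 1 + real (r + d)) + (2 * real (Suc (r + d)) + \<sigma>) * (real r - real k)
        = (\<sigma> + 1 + real (2 * r + d)) * (1 + real r - real k + real d)"
      by (simp add: algebra_simps)
  qed (use pos in auto)
  also have "\<dots> = pochhammer (\<sigma> + 1) (2 * r + Suc d) * pochhammer (- real k) r * pochhammer (1 + real r - real k) (Suc d)
            / (fact (Suc d) * pochhammer (\<sigma> + real k + 1) (r + Suc d))"
  proof -
    have "pochhammer (\<sigma> + 1) (2 * r + Suc d) = pochhammer (\<sigma> + 1) (2 * r + d) * (\<sigma> + 1 + real (2 * r + d))"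
      "pochhammer (\<sigma> + real k + 1) (r + Suc d) = pochhammer (\<sigma> + real k + 1) (r + d) * (\<sigma> + real k + 1 + real (r + d))"
      "pochhammer (1 + real r - real k) (Suc d) = pochhammer (1 + real r - real k) d * (1 + real r - real k + real d)"
      by (simp_all only: add_Suc_right pochhammer_Suc)
    moreover have "fact (Suc d) = fact d * (real d + (1::real))" by (simp add: fact_Suc)
    ultimately show ?thesis unfolding P_def by (simp only: mult_ac)
  qed
  finally show ?case .
qed

lemma pochhammer_minus_nat_div_fact:
  assumes "r \<le> m"
  shows "pochhammer (- real m) r / fact m = (-1) ^ r / fact (m - r)"
proof -
  have "pochhammer (- real m) r = (-1) ^ r * (fact r * real (m choose r))" by (simp add: pochhammer_minus_nat)
  also have "fact r * real (m choose r) = fact m / fact (m - r)" by (rule fact_binomial[OF assms])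
  finally show ?thesis by simp
qed

lemma hahn_weight_closed_form_delta:
  fixes \<sigma> :: real
  assumes s: "\<sigma> > -1" and kn: "k \<le> n" and rn: "r \<le> n"
  shows "(-1) ^ r * (pochhammer (\<sigma> + 1) (2 * r + (n - r)) * pochhammer (- real k) r * pochhammer (1 + real r - real k) (n - r)
            / (fact (n - r) * pochhammer (\<sigma> + real k + 1) (r + (n - r))))
       = (if k = r then fact k * pochhammer (\<sigma> + 1) k else 0)"
proof (cases "r = k")
  case True
  have a1: "pochhammer (1 + real r - real k) (n - r) = fact (n - r)"
    using True by (simp add: pochhammer_fact)
  have a2: "pochhammer (\<sigma> + 1) (2 * r + (n - r)) = pochhammer (\<sigma> + 1) k * pochhammer (\<sigma> + real k + 1) (r + (n - r))"
  proof -
    have "2 * r + (n - r) = k + n" using True rn by simp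
    moreover have "pochhammer (\<sigma> + 1) (k + n) = pochhammer (\<sigma> + 1) k * pochhammer (\<sigma> + 1 + real k) n"
      by (rule pochhammer_product')
    moreover have "r + (n - r) = n" using rn by simp
    ultimately show ?thesis by (simp add: add_ac)
  qed
  have a3: "pochhammer (- real k) r = (-1) ^ k * fact k"
    using True by (simp add: pochhammer_same)
  have pos: "pochhammer (\<sigma> + real k + 1) (r + (n - r)) > 0" using s by (intro pochhammer_pos) simp
  show ?thesis using True pos unfolding a1 a2 a3
    by (simp add: field_simps power_add[symmetric] mult_2[symmetric])
next
  case False
  show ?thesis
  proof (cases "r < k")
    case True
    have "pochhammer (1 + real r - real k) (n - r) = 0"
      unfolding pochhammer_eq_0_iff using True kn by (intro exI[of _ "k - r - 1"]) auto
    then show ?thesis using False by simp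
  next
    case False': False
    then have "k < r" using False by simp
    then show ?thesis using False by (simp add: pochhammer_minus_nat_zero)
  qed
qed

lemma hahn_weight_orthogonality:
  fixes \<sigma> :: real
  assumes s: "\<sigma> > -1" and kn: "k \<le> n" and rn: "r \<le> n"
  shows "(\<Sum>m\<le>n. hahn_weight_factor \<sigma> m * pochhammer (- real k) m * pochhammer (- real m) r * pochhammer (real m + \<sigma>) r
            / (fact m * pochhammer (\<sigma> + real k + 1) m))
       = (if k = r then fact k * pochhammer (\<sigma> + 1) k else 0)"
proof -
  let ?f = "\<lambda>m. hahn_weight_factor \<sigma> m * pochhammer (- real k) m * pochhammer (- real m) r * pochhammer (real m + \<sigma>) r
            / (fact m * pochhammer (\<sigma> + real k + 1) m)"
  have z: "?f m = 0" if "m < r" for m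
    using that by (simp add: pochhammer_minus_nat_zero)
  have "(\<Sum>m\<le>n. ?f m) = (\<Sum>m\<in>{r..r + (n - r)}. ?f m)"
    using rn by (intro sum.mono_neutral_right ballI z) auto
  also have "\<dots> = (\<Sum>m\<in>{r..r + (n - r)}. (-1) ^ r * (hahn_weight_factor \<sigma> m * pochhammer (real m + \<sigma>) r * pochhammer (- real k) m
            / (fact (m - r) * pochhammer (\<sigma> + real k + 1) m)))"
  proof (intro sum.cong refl)
    fix m assume "m \<in> {r..r + (n - r)}"
    then have rm: "r \<le> m" by simp
    have "?f m = hahn_weight_factor \<sigma> m * pochhammer (- real k) m * pochhammer (real m + \<sigma>) r
            / pochhammer (\<sigma> + real k + 1) m * (pochhammer (- real m) r / fact m)"
      by (simp add: field_simps)
    also have "\<dots> = (-1) ^ r * (hahn_weight_factor \<sigma> m * pochhammer (real m + \<sigma>) r * pochhammer (- real k) m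
            / (fact (m - r) * pochhammer (\<sigma> + real k + 1) m))"
      unfolding pochhammer_minus_nat_div_fact[OF rm] by (simp add: field_simps)
    finally show "?f m = \<dots>" .
  qed
  also have "\<dots> = (-1) ^ r * (pochhammer (\<sigma> + 1) (2 * r + (n - r)) * pochhammer (- real k) r * pochhammer (1 + real r - real k) (n - r)
            / (fact (n - r) * pochhammer (\<sigma> + real k + 1) (r + (n - r))))"
    by (simp only: sum_distrib_left[symmetric] hahn_weight_partial_sum[OF s])
  also have "\<dots> = (if k = r then fact k * pochhammer (\<sigma> + 1) k else 0)"
    by (rule hahn_weight_closed_form_delta[OF s kn rn])
  finally show ?thesis .
qed


text \<open>
  By the Bernstein transform of the Hahn polynomials, the polynomial
  with Bernstein coefficients \<open>c_coef1 n \<alpha> \<beta> i\<close> is a combination of the \<open>R\<^sub>m\<close>; its moments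
  reduce, after exchanging the sums, to the orthogonality relation above.
\<close>

definition hahn_weight :: "real \<Rightarrow> real \<Rightarrow> nat \<Rightarrow> real" where
  "hahn_weight \<alpha> \<beta> m = hahn_weight_factor (\<alpha> + \<beta> + 1) m * pochhammer (\<beta> + 1) m / (fact m * pochhammer (\<alpha> + 1) m)"

lemma Beta_pos_real: "x > 0 \<Longrightarrow> y > 0 \<Longrightarrow> Beta x y > (0::real)"
  unfolding Beta_def by simp

lemma c_coef1_comb:
  "bernstein_comb n (c_coef1 n \<alpha> \<beta> i) = smult (1 / Beta (\<alpha> + 1) (\<beta> + 1))
      (\<Sum>m\<le>n. smult (hahn_weight \<alpha> \<beta> m * hahnQ m (real i) \<beta> \<alpha> n) (jacobi_hyp \<beta> \<alpha> m [:0, 1:]))"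
proof -
  have "poly (bernstein_comb n (c_coef1 n \<alpha> \<beta> i)) x = 1 / Beta (\<alpha> + 1) (\<beta> + 1) *
      (\<Sum>m\<le>n. hahn_weight \<alpha> \<beta> m * hahnQ m (real i) \<beta> \<alpha> n * (\<Sum>j\<le>n. hahnQ m (real j) \<beta> \<alpha> n * bernstein n j x))" for x
    unfolding poly_bernstein_comb c_coef1_def hahn_weight_def sum_distrib_right sum_distrib_left
    by (subst sum.swap) (simp add: mult_ac)
  then show ?thesis
    by (simp add: poly_eq_poly_eq_iff[symmetric] fun_eq_iff poly_sum hahnQ_bernstein_sum)
qed

text \<open>The Hahn sum may be extended to all \<open>r \<le> n\<close>, since \<open>(-m)\<^sub>r = 0\<close> for \<open>r > m\<close>.\<close>
lemma hahnQ_extend: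
  assumes "m \<le> n"
  shows "hahnQ m x A B N = (\<Sum>r\<le>n. hahn_coeff A B m r / pochhammer (- real N) r * pochhammer (- x) r)"
  unfolding hahnQ_hahn_coeff using assms
  by (intro sum.mono_neutral_left) (auto simp: hahn_coeff_def pochhammer_minus_nat_zero)

lemma c_coef1_moment_double_sum:
  assumes a: "\<alpha> > -1" and b: "\<beta> > -1"
  defines "\<sigma> \<equiv> \<alpha> + \<beta> + 1"
  shows "jacobi_integral \<alpha> \<beta> (bernstein_comb n (c_coef1 n \<alpha> \<beta> i) * monom 1 k)
      = pochhammer (\<beta> + 1) k / pochhammer (\<alpha> + \<beta> + 2) k *
        (\<Sum>r\<le>n. pochhammer (- real i) r / (fact r * pochhammer (\<beta> + 1) r * pochhammer (- real n) r) *
          (\<Sum>m\<le>n. hahn_weight_factor \<sigma> m * pochhammer (- real k) m * pochhammer (- real m) r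
              * pochhammer (real m + \<sigma>) r / (fact m * pochhammer (\<sigma> + real k + 1) m)))"
proof -
  define B where "B = Beta (\<alpha> + 1) (\<beta> + 1)"
  have Bp: "B > 0" unfolding B_def using a b by (intro Beta_pos_real) auto
  define Ck where "Ck = pochhammer (\<beta> + 1) k / pochhammer (\<alpha> + \<beta> + 2) k"
  define X where "X m = hahn_weight_factor \<sigma> m * pochhammer (- real k) m / (fact m * pochhammer (\<sigma> + real k + 1) m)" for m
  define Y where "Y m r = pochhammer (- real m) r * pochhammer (real m + \<sigma>) r" for m r
  define Z where "Z r = pochhammer (- real i) r / (fact r * pochhammer (\<beta> + 1) r * pochhammer (- real n) r)" for r
  have "jacobi_integral \<alpha> \<beta> (bernstein_comb n (c_coef1 n \<alpha> \<beta> i) * monom 1 k)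
      = 1 / B * (\<Sum>m\<le>n. hahn_weight \<alpha> \<beta> m * hahnQ m (real i) \<beta> \<alpha> n
          * jacobi_integral \<alpha> \<beta> (jacobi_hyp \<beta> \<alpha> m [:0, 1:] * monom 1 k))"
    unfolding c_coef1_comb B_def by (simp add: sum_distrib_right jacobi_integral_smult jacobi_integral_sum)
  also have "\<dots> = (\<Sum>m\<le>n. (Ck * X m) * (\<Sum>r\<le>n. Y m r * Z r))"
  proof -
    have "1 / B * (hahn_weight \<alpha> \<beta> m * hahnQ m (real i) \<beta> \<alpha> n
          * jacobi_integral \<alpha> \<beta> (jacobi_hyp \<beta> \<alpha> m [:0, 1:] * monom 1 k))
        = Ck * X m * (\<Sum>r\<le>n. Y m r * Z r)" if "m \<le> n" for m
    proof -
      have Q: "hahnQ m (real i) \<beta> \<alpha> n = (\<Sum>r\<le>n. Y m r * Z r)"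
        unfolding Y_def Z_def \<sigma>_def using that
        by (simp add: hahnQ_extend hahn_coeff_def field_simps add_ac)
      have e: "\<alpha> + \<beta> + real k + 2 = \<sigma> + real k + 1" by (simp add: \<sigma>_def)
      have pos: "pochhammer (\<alpha> + 1) m > 0" "pochhammer (\<beta> + 1) m > 0"
        using a b by (auto intro!: pochhammer_pos)
      show ?thesis
        unfolding Q jacobi_hyp_moment[OF a b] e B_def[symmetric] hahn_weight_def X_def Ck_def \<sigma>_def[symmetric]
        using Bp pos by (simp add: field_simps)
    qed
    then show ?thesis by (simp add: sum_distrib_left)
  qed
  also have "\<dots> = Ck * (\<Sum>r\<le>n. Z r * (\<Sum>m\<le>n. X m * Y m r))"
    by (simp add: sum_distrib_left sum_distrib_right mult_ac) (rule sum.swap)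
  finally show ?thesis unfolding Ck_def Z_def X_def Y_def by (simp add: mult_ac)
qed

text \<open>By the orthogonality relation only the term \<open>r = k\<close> of the double sum survives.\<close>
lemma c_coef1_dual_moments:
  assumes a: "\<alpha> > -1" and b: "\<beta> > -1"
  shows "dual_moments \<alpha> \<beta> n i (bernstein_comb n (c_coef1 n \<alpha> \<beta> i))"
  unfolding dual_moments_def
proof (intro allI impI)
  fix k assume kn: "k \<le> n"
  define \<sigma> where "\<sigma> = \<alpha> + \<beta> + 1"
  have s: "\<sigma> > -1" using a b by (simp add: \<sigma>_def)
  define Z where "Z r = pochhammer (- real i) r / (fact r * pochhammer (\<beta> + 1) r * pochhammer (- real n) r)" for r
  have "jacobi_integral \<alpha> \<beta> (bernstein_comb n (c_coef1 n \<alpha> \<beta> i) * monom 1 k)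
      = pochhammer (\<beta> + 1) k / pochhammer (\<alpha> + \<beta> + 2) k *
        (\<Sum>r\<le>n. Z r * (if k = r then fact k * pochhammer (\<sigma> + 1) k else 0))"
    unfolding c_coef1_moment_double_sum[OF a b] \<sigma>_def[symmetric] Z_def
    by (simp add: hahn_weight_orthogonality[OF s kn])
  also have "\<dots> = pochhammer (\<beta> + 1) k / pochhammer (\<alpha> + \<beta> + 2) k * (Z k * (fact k * pochhammer (\<sigma> + 1) k))"
    using kn by (simp add: sum_delta_mult)
  also have "\<dots> = pochhammer (- real i) k / pochhammer (- real n) k"
  proof -
    have "\<sigma> + 1 = \<alpha> + \<beta> + 2" by (simp add: \<sigma>_def)
    moreover have "pochhammer (\<alpha> + \<beta> + 2) k > 0" "pochhammer (\<beta> + 1) k > 0"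
      using a b by (auto intro!: pochhammer_pos)
    moreover have "pochhammer (- real n) k \<noteq> 0" using kn by (rule pochhammer_minus_nat_nonzero)
    ultimately show ?thesis unfolding Z_def by (simp add: field_simps)
  qed
  finally show "jacobi_integral \<alpha> \<beta> (bernstein_comb n (c_coef1 n \<alpha> \<beta> i) * monom 1 k)
      = pochhammer (- real i) k / pochhammer (- real n) k" .
qed

text \<open>
  Its polynomial is a combination of the mirrored Jacobi-type
  polynomials \<open>S\<^sub>h := jacobi_hyp \<alpha> (\<beta> + h + 1) (n - h) (1 - x)\<close>, whose moments are again
  Beta--Vandermonde sums; the resulting sum over \<open>h\<close> is a further Vandermonde sum.
\<close>

text \<open>For \<open>\<alpha> > -1\<close>, the numbers \<open>k - \<alpha> - n\<close> (\<open>k < n\<close>) avoid the poles of the Vandermonde sums.\<close>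
lemma shifted_not_neg_int:
  assumes a: "\<alpha> > -1" and "k + q < n"
  shows "real k - \<alpha> - real n \<noteq> - real q"
  using assms by auto

lemma pochhammer_shifted_nonzero:
  assumes a: "\<alpha> > -1" and "k + j \<le> n"
  shows "pochhammer (real k - \<alpha> - real n) j \<noteq> 0"
  using shifted_not_neg_int[OF a, of k _ n] assms unfolding pochhammer_eq_0_iff by fastforce

lemma regroup_signed_fraction:
  fixes A Bq C D e F g H u Pm E :: real
  assumes "E = e * u" "u * u = 1" "C \<noteq> 0" "D \<noteq> 0" "g \<noteq> 0" "H \<noteq> 0" "Pm \<noteq> 0"
  shows "A * Bq / (C * D) * (e * (F / g) / H) = A / C * (E * F / (H * (u * Pm))) * (Pm * Bq / (g * D))"
proof -
  have u: "u \<noteq> 0" using assms(2) by auto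
  have "A / C * (E * F / (H * (u * Pm))) * (Pm * Bq / (g * D)) = A * (e * (u * u)) * F * Bq / (C * H * u * u * g * D)"
    using assms u by (simp add: field_simps)
  also have "\<dots> = A * e * F * Bq / (C * H * g * D)"
    using assms(2) u by (simp add: field_simps)
  also have "\<dots> = A * Bq / (C * D) * (e * (F / g) / H)"
    using assms by (simp add: field_simps)
  finally show ?thesis by simp
qed

lemma pochhammer_minus_nat_complement:
  assumes "t \<le> N"
  shows "pochhammer (- real N) (N - t) = (-1) ^ (N - t) * (fact N / fact t)"
proof -
  have "pochhammer (- real N) (N - t) = (-1) ^ (N - t) * (fact (N - t) * real (N choose (N - t)))"
    by (simp only: pochhammer_minus_nat mult.assoc)
  also have "fact (N - t) * real (N choose (N - t)) = fact N / fact (N - (N - t))"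
    by (rule fact_binomial) simp
  finally show ?thesis using assms by simp
qed

lemma pochhammer_split_reflect:
  fixes c :: real
  assumes "t \<le> N"
  shows "pochhammer c N = pochhammer c (N - t) * ((-1) ^ t * pochhammer (- (c + real N - 1)) t)"
proof -
  have e: "c + real (N - t) = (c + real N - 1) - real t + 1" using assms by (simp add: of_nat_diff)
  have "pochhammer c (N - t + t) = pochhammer c (N - t) * pochhammer (c + real (N - t)) t"
    by (rule pochhammer_product')
  also have "pochhammer (c + real (N - t)) t = (-1) ^ t * pochhammer (- (c + real N - 1)) t"
    unfolding e by (rule pochhammer_minus')
  finally show ?thesis using assms by simp
qed

lemma second_formula_term:
  fixes \<alpha> \<beta> :: real
  assumes a: "\<alpha> > -1" and b: "\<beta> > -1" and ki: "k \<le> i" and "i \<le> n" and t: "t \<le> i - k"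
  shows "pochhammer (- real i) (k + t) / pochhammer (- \<alpha> - real n) (k + t)
            * (pochhammer (real k - real n) (n - (k + t)) / pochhammer (\<alpha> + \<beta> + real k + 2) (n - (k + t)))
       = pochhammer (- real i) k / pochhammer (- \<alpha> - real n) k
          * ((-1) ^ (n - k) * fact (n - k) / pochhammer (\<alpha> + \<beta> + real k + 2) (n - k))
          * (pochhammer (- (\<alpha> + \<beta> + 1) - real n) t * pochhammer (- real (i - k)) t
              / (fact t * pochhammer (real k - \<alpha> - real n) t))"
proof -
  have tn: "t \<le> n - k" using assms by simp
  have nz: "pochhammer (- \<alpha> - real n) k \<noteq> 0"
    using pochhammer_shifted_nonzero[OF a, of 0 k n] assms by simp
  have nz2: "pochhammer (real k - \<alpha> - real n) t \<noteq> 0"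
    using pochhammer_shifted_nonzero[OF a, of k t n] assms by simp
  have f1: "pochhammer (- real i) (k + t) = pochhammer (- real i) k * pochhammer (- real (i - k)) t"
    using pochhammer_product'[of "- real i" k t] ki by (simp add: of_nat_diff)
  have f2: "pochhammer (- \<alpha> - real n) (k + t) = pochhammer (- \<alpha> - real n) k * pochhammer (real k - \<alpha> - real n) t"
    using pochhammer_product'[of "- \<alpha> - real n" k t] by (simp add: algebra_simps)
  have f3: "pochhammer (real k - real n) (n - (k + t)) = (-1) ^ (n - k - t) * (fact (n - k) / fact t)"
    using pochhammer_minus_nat_complement[of t "n - k"] tn assms by (simp add: of_nat_diff diff_diff_add)
  define c0 where "c0 = \<alpha> + \<beta> + real k + 2"
  have c0p: "c0 > 0" using a b by (simp add: c0_def)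
  have f4: "pochhammer c0 (n - k) = pochhammer c0 (n - (k + t)) * ((-1) ^ t * pochhammer (- (\<alpha> + \<beta> + 1) - real n) t)"
  proof -
    have e: "- (c0 + real (n - k) - 1) = - (\<alpha> + \<beta> + 1) - real n"
      using assms by (simp add: c0_def of_nat_diff)
    have "pochhammer c0 (n - k) = pochhammer c0 (n - k - t) * ((-1) ^ t * pochhammer (- (c0 + real (n - k) - 1)) t)"
      by (rule pochhammer_split_reflect[OF tn])
    then show ?thesis unfolding e diff_diff_add .
  qed
  have p1: "pochhammer c0 (n - (k + t)) > 0" "pochhammer c0 (n - k) > 0" using c0p by (auto intro!: pochhammer_pos)
  have sg: "(-1::real) ^ (n - k - t) * (-1) ^ t = (-1) ^ (n - k)"
  proof -
    have "n - k - t + t = n - k" using tn by simp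
    then show ?thesis by (simp add: power_add[symmetric])
  qed
  have sg2: "((-1::real) ^ t) * ((-1) ^ t) = 1"
    by (simp add: power_add[symmetric] flip: mult_2)
  have Pm: "pochhammer (- (\<alpha> + \<beta> + 1) - real n) t \<noteq> 0" using p1(2) unfolding f4 by auto
  show ?thesis
    unfolding f1 f2 f3 c0_def[symmetric] f4
    by (rule regroup_signed_fraction[OF sg[symmetric] sg2 nz nz2 _ _ Pm]) (use p1 \<open>i \<le> n\<close> ki in auto)
qed

lemma second_formula_sum:
  fixes \<alpha> \<beta> :: real
  assumes a: "\<alpha> > -1" and b: "\<beta> > -1" and kn: "k \<le> n" and i: "i \<le> n"
  shows "(\<Sum>h\<le>i. pochhammer (- real i) h / pochhammer (- \<alpha> - real n) h
            * (pochhammer (real k - real n) (n - h) / pochhammer (\<alpha> + \<beta> + real k + 2) (n - h)))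
    = (if k \<le> i then pochhammer (- real i) k / pochhammer (- \<alpha> - real n) k
          * ((-1) ^ (n - k) * fact (n - k) / pochhammer (\<alpha> + \<beta> + real k + 2) (n - k))
          * (pochhammer (real k + \<beta> + 1) (i - k) / pochhammer (real k - \<alpha> - real n) (i - k)) else 0)"
proof -
  let ?f = "\<lambda>h. pochhammer (- real i) h / pochhammer (- \<alpha> - real n) h
            * (pochhammer (real k - real n) (n - h) / pochhammer (\<alpha> + \<beta> + real k + 2) (n - h))"
  have z: "?f h = 0" if "h < k" for h
  proof -
    have "pochhammer (real k - real n) (n - h) = 0"
      unfolding pochhammer_eq_0_iff using that kn by (intro exI[of _ "n - k"]) auto
    then show ?thesis by simp
  qed
  show ?thesis
  proof (cases "k \<le> i")
    case False
    have "(\<Sum>h\<le>i. ?f h) = 0"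
      by (intro sum.neutral ballI z) (use False in auto)
    then show ?thesis using False by simp
  next
    case True
    have "(\<Sum>h\<le>i. ?f h) = (\<Sum>t\<le>i - k. ?f (k + t))"
      by (rule sum_shift_from[OF True z])
    also have "\<dots> = (\<Sum>t\<le>i - k. pochhammer (- real i) k / pochhammer (- \<alpha> - real n) k
          * ((-1) ^ (n - k) * fact (n - k) / pochhammer (\<alpha> + \<beta> + real k + 2) (n - k))
          * (pochhammer (- (\<alpha> + \<beta> + 1) - real n) t * pochhammer (- real (i - k)) t
              / (fact t * pochhammer (real k - \<alpha> - real n) t)))"
      by (intro sum.cong refl second_formula_term[OF a b True i]) simp
    also have "\<dots> = pochhammer (- real i) k / pochhammer (- \<alpha> - real n) k
          * ((-1) ^ (n - k) * fact (n - k) / pochhammer (\<alpha> + \<beta> + real k + 2) (n - k))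
          * (\<Sum>t\<le>i - k. pochhammer (- (\<alpha> + \<beta> + 1) - real n) t * pochhammer (- real (i - k)) t
              / (fact t * pochhammer (real k - \<alpha> - real n) t))"
      by (simp add: sum_distrib_left)
    also have "(\<Sum>t\<le>i - k. pochhammer (- (\<alpha> + \<beta> + 1) - real n) t * pochhammer (- real (i - k)) t
              / (fact t * pochhammer (real k - \<alpha> - real n) t))
        = pochhammer ((real k - \<alpha> - real n) - (- (\<alpha> + \<beta> + 1) - real n)) (i - k) / pochhammer (real k - \<alpha> - real n) (i - k)"
      by (rule chu_vandermonde) (use shifted_not_neg_int[OF a, of k _ n] i in auto)
    also have "(real k - \<alpha> - real n) - (- (\<alpha> + \<beta> + 1) - real n) = real k + \<beta> + 1" by simp
    finally show ?thesis using True by simp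
  qed
qed


definition c2_prefactor :: "nat \<Rightarrow> real \<Rightarrow> real \<Rightarrow> nat \<Rightarrow> real" where
  "c2_prefactor n \<alpha> \<beta> i = (-1) ^ n * pochhammer (\<alpha> + \<beta> + 2) n * pochhammer (- \<alpha> - real n) i
      / (Beta (\<alpha> + 1) (\<beta> + 1) * fact n * pochhammer (\<beta> + 1) i)"

lemma c_coef2_comb:
  assumes i: "i \<le> n"
  shows "bernstein_comb n (c_coef2 n \<alpha> \<beta> i) = smult (c2_prefactor n \<alpha> \<beta> i)
      (\<Sum>h\<le>i. smult (pochhammer (- real i) h / pochhammer (- \<alpha> - real n) h)
          (jacobi_hyp \<alpha> (\<beta> + real h + 1) (n - h) [:1, -1:]))"
proof -
  have "poly (bernstein_comb n (c_coef2 n \<alpha> \<beta> i)) x = c2_prefactor n \<alpha> \<beta> i *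
      (\<Sum>h\<le>i. pochhammer (- real i) h / pochhammer (- \<alpha> - real n) h *
          (\<Sum>j\<le>n. hahnQ (n - h) (real n - real j) \<alpha> (\<beta> + real h + 1) n * bernstein n j x))" for x
    unfolding poly_bernstein_comb c_coef2_def c2_prefactor_def sum_distrib_right sum_distrib_left
    by (subst sum.swap) (simp add: mult_ac)
  moreover have "h \<le> i \<Longrightarrow> n - h \<le> n" for h by simp
  ultimately show ?thesis
    by (simp add: poly_eq_poly_eq_iff[symmetric] fun_eq_iff poly_sum hahnQ_bernstein_sum_mirror)
qed

lemma jacobi_hyp_moment_shifted:
  assumes a: "\<alpha> > -1" and b: "\<beta> > -1" and h: "h \<le> n"
  shows "jacobi_integral \<alpha> \<beta> (jacobi_hyp \<alpha> (\<beta> + real h + 1) (n - h) [:1, -1:] * monom 1 k)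
       = Beta (\<alpha> + 1) (\<beta> + 1) * pochhammer (\<beta> + 1) k / pochhammer (\<alpha> + \<beta> + 2) k
          * (pochhammer (real k - real n) (n - h) / pochhammer (\<alpha> + \<beta> + real k + 2) (n - h))"
proof -
  have "jacobi_integral \<alpha> \<beta> (jacobi_hyp \<alpha> (\<beta> + real h + 1) (n - h) [:1, -1:] * monom 1 k)
      = (\<Sum>r\<le>n - h. hahn_coeff \<alpha> (\<beta> + real h + 1) (n - h) r * Beta (\<alpha> + real r + 1) ((\<beta> + real k) + 1))"
    by (simp add: jacobi_hyp_def sum_distrib_right jacobi_integral_sum jacobi_integral_smult
        jacobi_integral_monomial[OF a b] add_ac)
  also have "\<dots> = Beta (\<alpha> + 1) (\<beta> + real k + 1)
      * (pochhammer (real k - real n) (n - h) / pochhammer (\<alpha> + \<beta> + real k + 2) (n - h))"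
    using hahn_coeff_Beta_sum[of \<alpha> "\<beta> + real k" "\<beta> + real h + 1" "n - h"] a b h
    by (simp add: of_nat_diff add_ac)
  also have "Beta (\<alpha> + 1) (\<beta> + real k + 1) = Beta (\<alpha> + 1) (\<beta> + 1) * pochhammer (\<beta> + 1) k / pochhammer (\<alpha> + \<beta> + 2) k"
    using Beta_shift_left[of "\<beta> + 1" "\<alpha> + 1" k] a b by (simp add: Beta_commute add_ac)
  finally show ?thesis .
qed

lemma cancel_signed_prefactor:
  fixes sk snk X1 X2 Y1 Y2 Z1 Z2 B fn fnk Pi :: real
  assumes "X1 \<noteq> 0" "X2 \<noteq> 0" "Y1 \<noteq> 0" "Y2 \<noteq> 0" "Z1 \<noteq> 0" "Z2 \<noteq> 0" "B \<noteq> 0" "fn \<noteq> 0" "fnk \<noteq> 0"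
    "sk * sk = 1" "snk * snk = 1"
  shows "(sk * snk) * (X1 * X2) * (Y1 * Y2) / (B * fn * (Z1 * Z2)) * (B * Z1 / X1 * (Pi / Y1 * (snk * fnk / X2) * (Z2 / Y2)))
     = Pi / (sk * (fn / fnk))"
proof -
  have sk: "sk \<noteq> 0" using assms(10) by auto
  have "(sk * snk) * (X1 * X2) * (Y1 * Y2) / (B * fn * (Z1 * Z2)) * (B * Z1 / X1 * (Pi / Y1 * (snk * fnk / X2) * (Z2 / Y2)))
      = sk * (snk * snk) * Pi * fnk / fn"
    using assms by (simp add: field_simps)
  also have "\<dots> = (sk * sk) * Pi / (sk * (fn / fnk))" using sk assms by (simp add: field_simps)
  finally show ?thesis using assms(10) by simp
qed

lemma second_formula_evaluation:
  assumes a: "\<alpha> > -1" and b: "\<beta> > -1" and i: "i \<le> n" and kn: "k \<le> n"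
  shows "c2_prefactor n \<alpha> \<beta> i * (Beta (\<alpha> + 1) (\<beta> + 1) * pochhammer (\<beta> + 1) k / pochhammer (\<alpha> + \<beta> + 2) k *
       (\<Sum>h\<le>i. pochhammer (- real i) h / pochhammer (- \<alpha> - real n) h
            * (pochhammer (real k - real n) (n - h) / pochhammer (\<alpha> + \<beta> + real k + 2) (n - h))))
     = pochhammer (- real i) k / pochhammer (- real n) k"
proof (cases "k \<le> i")
  case False
  then show ?thesis unfolding second_formula_sum[OF a b kn i] by (simp add: pochhammer_minus_nat_zero)
next
  case True
  have e1: "pochhammer (\<alpha> + \<beta> + 2) n = pochhammer (\<alpha> + \<beta> + 2) k * pochhammer (\<alpha> + \<beta> + real k + 2) (n - k)"
    using pochhammer_product[OF kn, of "\<alpha> + \<beta> + 2"] by (simp add: add_ac)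
  have e2: "pochhammer (- \<alpha> - real n) i = pochhammer (- \<alpha> - real n) k * pochhammer (real k - \<alpha> - real n) (i - k)"
    using pochhammer_product[OF True, of "- \<alpha> - real n"] by (simp add: algebra_simps)
  have e3: "pochhammer (\<beta> + 1) i = pochhammer (\<beta> + 1) k * pochhammer (real k + \<beta> + 1) (i - k)"
    using pochhammer_product[OF True, of "\<beta> + 1"] by (simp add: add_ac)
  have e4: "pochhammer (- real n) k = (-1) ^ k * (fact n / fact (n - k))"
    by (simp add: pochhammer_minus_nat fact_binomial[OF kn] mult.assoc)
  have e5: "((-1)::real) ^ n = (-1) ^ k * (-1) ^ (n - k)"
    using kn by (simp add: power_add[symmetric])
  have nz: "pochhammer (- \<alpha> - real n) k \<noteq> 0" "pochhammer (real k - \<alpha> - real n) (i - k) \<noteq> 0"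
    using pochhammer_shifted_nonzero[OF a, of 0 k n] pochhammer_shifted_nonzero[OF a, of k "i - k" n] kn i True
    by auto
  have pos: "pochhammer (\<alpha> + \<beta> + 2) k > 0" "pochhammer (\<alpha> + \<beta> + real k + 2) (n - k) > 0"
    "pochhammer (\<beta> + 1) k > 0" "pochhammer (real k + \<beta> + 1) (i - k) > 0" "Beta (\<alpha> + 1) (\<beta> + 1) > 0"
    using a b by (auto intro!: pochhammer_pos Beta_pos_real)
  have s1: "((-1)::real) ^ k * (-1) ^ k = 1" by (simp add: power_add[symmetric] flip: mult_2)
  have s2: "((-1)::real) ^ (n - k) * (-1) ^ (n - k) = 1" by (simp add: power_add[symmetric] flip: mult_2)
  show ?thesis
    unfolding second_formula_sum[OF a b kn i] if_P[OF True] c2_prefactor_def e1 e2 e3 e4 e5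
    by (rule cancel_signed_prefactor) (use pos nz s1 s2 in auto)
qed

lemma c_coef2_dual_moments:
  assumes a: "\<alpha> > -1" and b: "\<beta> > -1" and i: "i \<le> n"
  shows "dual_moments \<alpha> \<beta> n i (bernstein_comb n (c_coef2 n \<alpha> \<beta> i))"
  unfolding dual_moments_def
proof (intro allI impI)
  fix k assume kn: "k \<le> n"
  have "jacobi_integral \<alpha> \<beta> (bernstein_comb n (c_coef2 n \<alpha> \<beta> i) * monom 1 k)
      = c2_prefactor n \<alpha> \<beta> i * (\<Sum>h\<le>i. pochhammer (- real i) h / pochhammer (- \<alpha> - real n) h
          * jacobi_integral \<alpha> \<beta> (jacobi_hyp \<alpha> (\<beta> + real h + 1) (n - h) [:1, -1:] * monom 1 k))"
    unfolding c_coef2_comb[OF i] by (simp add: sum_distrib_right jacobi_integral_smult jacobi_integral_sum)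
  also have "\<dots> = c2_prefactor n \<alpha> \<beta> i * (Beta (\<alpha> + 1) (\<beta> + 1) * pochhammer (\<beta> + 1) k / pochhammer (\<alpha> + \<beta> + 2) k *
       (\<Sum>h\<le>i. pochhammer (- real i) h / pochhammer (- \<alpha> - real n) h
            * (pochhammer (real k - real n) (n - h) / pochhammer (\<alpha> + \<beta> + real k + 2) (n - h))))"
  proof -
    have "pochhammer (- real i) h / pochhammer (- \<alpha> - real n) h
          * jacobi_integral \<alpha> \<beta> (jacobi_hyp \<alpha> (\<beta> + real h + 1) (n - h) [:1, -1:] * monom 1 k)
        = Beta (\<alpha> + 1) (\<beta> + 1) * pochhammer (\<beta> + 1) k / pochhammer (\<alpha> + \<beta> + 2) k
          * (pochhammer (- real i) h / pochhammer (- \<alpha> - real n) h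
            * (pochhammer (real k - real n) (n - h) / pochhammer (\<alpha> + \<beta> + real k + 2) (n - h)))"
      if "h \<le> i" for h
      using that i by (simp only: jacobi_hyp_moment_shifted[OF a b]) (simp add: mult_ac)
    then show ?thesis by (simp add: sum_distrib_left)
  qed
  also have "\<dots> = pochhammer (- real i) k / pochhammer (- real n) k"
    by (rule second_formula_evaluation[OF a b i kn])
  finally show "jacobi_integral \<alpha> \<beta> (bernstein_comb n (c_coef2 n \<alpha> \<beta> i) * monom 1 k)
      = pochhammer (- real i) k / pochhammer (- real n) k" .
qed

theorem theorem2p1:
  fixes n :: nat and \<alpha> \<beta> :: real
  assumes "\<alpha> > -1" and "\<beta> > -1" and "i \<le> n"
  shows "(\<forall>x. poly (dual_bernstein n \<alpha> \<beta> i) x = (\<Sum>j\<le>n. c_coef1 n \<alpha> \<beta> i j * bernstein n j x))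
       \<and> (\<forall>j\<le>n. c_coef1 n \<alpha> \<beta> i j = c_coef2 n \<alpha> \<beta> i j)"
proof (intro conjI allI impI)
  have first: "\<And>i'. i' \<le> n \<Longrightarrow> dual_moments \<alpha> \<beta> n i' (bernstein_comb n (c_coef1 n \<alpha> \<beta> i'))"
    using c_coef1_dual_moments[OF assms(1,2)] .
  show "poly (dual_bernstein n \<alpha> \<beta> i) x = (\<Sum>j\<le>n. c_coef1 n \<alpha> \<beta> i j * bernstein n j x)" for x
    using dual_bernstein_eq_comb[OF assms(1,2) first assms(3)] by (simp add: poly_bernstein_comb)
  show "c_coef1 n \<alpha> \<beta> i j = c_coef2 n \<alpha> \<beta> i j" if "j \<le> n" for j
  proof -
    have "c_coef2 n \<alpha> \<beta> i j = c_coef1 n \<alpha> \<beta> i j"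
    proof (rule dual_moments_coefficients_unique[OF first _ assms(3) that])
      show "jacobi_integral \<alpha> \<beta> (bernstein_comb n (c_coef2 n \<alpha> \<beta> i) * bernstein_poly n j') = (if i = j' then 1 else 0)"
        if "j' \<le> n" for j'
        using dual_moments_biorthogonal[OF c_coef2_dual_moments[OF assms] that assms(3)] .
    qed
    then show ?thesis by simp
  qed
qed

end
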